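(* Let $G$ be a finite simple graph on $[d]$ and let $I\in\{\langle [I_G]_2\rangle, J_G, L_G\}$. If $\mathcal{G}$ is the reduced Gröbner basis of $I$ with respect to a reverse lexicographic order on $R[G]$ such that $x_S\ge x_\emptyset$ for every $S\in S(G)$, then $\{\, g/x_\emptyset^{k} : g\in\mathcal{G},\ k\in\mathbb{Z}_{\ge0},\ x_\emptyset^k \text{ divides } g,\ x_\emptyset^{k+1}\text{ does not divide } g\,\}$ is a Gröbner basis of $I_G$.
   Context: A stable set of $G$ is a subset of $[d]$ with no edge of $G$ (including $\emptyset$ and singletons); $S(G)$ is the set of stable sets; $R[G]=\mathbb{K}[x_S : S\in S(G)]$ over a field $\mathbb{K}$, all variables of degree $1$. $I_G$ is the kernel of $\pi:R[G]\to\mathbb{K}[t_1,\dots,t_d,s]$, $\pi(x_S)=s\prod_{j\in S}t_j$. $\langle [I_G]_2\rangle$ is the ideal generated by the degree-$2$ homogeneous elements of $I_G$. $J_G$ is the ideal generated by all $x_{S_1}x_{S_2}-x_{S_3}x_{S_4}$ with $S_i\in S(G)$, $S_1\cap S_2=S_3\cap S_4=\emptyset$, $S_1\cup S_2=S_3\cup S_4$. $L_G=\langle x_{S\setminus\{i\}}x_{\{i\}}-x_Sx_\emptyset : i\in S\in S(G),\ |S|\ge2\rangle$. The (graded) reverse lexicographic order induced by an ordering $y_1>\dots>y_n$ of the variables: $u<v$ if $\deg u<\deg v$, or degrees are equal and the rightmost nonzero entry of the exponent vector of $v$ minus that of $u$ is negative. A Gröbner basis of $I$ w.r.t. $<$ is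 a finite subset of $I$ whose leading monomials generate ${\rm in}_<(I)$; it is reduced if all leading coefficients are $1$ and no monomial of any element lies in the ideal generated by the leading monomials of the other elements. *)

theory Defs
  imports Main "HOL-Library.Poly_Mapping"
begin

text \<open>Variables of R[G] are indexed by stable sets (type nat set); monomials are
  nat set =>0 nat; polynomials with coefficients in 'k are
  (nat set =>0 nat) =>0 k.\<close>

type_synonym mon = "nat set \<Rightarrow>\<^sub>0 nat"
type_synonym 'k pol = "mon \<Rightarrow>\<^sub>0 'k"

definition simple_graph :: "nat \<Rightarrow> nat set set \<Rightarrow> bool" where
  "simple_graph d E \<longleftrightarrow> (\<forall>e\<in>E. \<exists>i j. i \<noteq> j \<and> i \<in> {1..d} \<and> j \<in> {1..d} \<and> e = {i, j})"

definition stable_sets :: "nat \<Rightarrow> nat set set \<Rightarrow> nat set set" where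
  "stable_sets d E = {S. S \<subseteq> {1..d} \<and> (\<forall>e\<in>E. \<not> e \<subseteq> S)}"

definition var :: "nat set \<Rightarrow> 'k::comm_ring_1 pol" where
  "var S = Poly_Mapping.single (Poly_Mapping.single S 1) 1"

definition mon_poly :: "mon \<Rightarrow> 'k::comm_ring_1 pol" where
  "mon_poly m = Poly_Mapping.single m 1"

definition mdeg :: "mon \<Rightarrow> nat" where
  "mdeg m = (\<Sum>S\<in>Poly_Mapping.keys m. Poly_Mapping.lookup m S)"

definition in_ring :: "nat set set \<Rightarrow> 'k::comm_ring_1 pol \<Rightarrow> bool" where
  "in_ring V p \<longleftrightarrow> (\<forall>m\<in>Poly_Mapping.keys p. Poly_Mapping.keys m \<subseteq> V)"

inductive_set ideal_in :: "nat set set \<Rightarrow> 'k::comm_ring_1 pol set \<Rightarrow> 'k pol set"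
  for V F where
  zero: "0 \<in> ideal_in V F"
| gen: "f \<in> F \<Longrightarrow> f \<in> ideal_in V F"
| add: "p \<in> ideal_in V F \<Longrightarrow> q \<in> ideal_in V F \<Longrightarrow> p + q \<in> ideal_in V F"
| mult: "in_ring V q \<Longrightarrow> p \<in> ideal_in V F \<Longrightarrow> q * p \<in> ideal_in V F"

text \<open>The map pi : x_S \<mapsto> s * prod_{j\<in>S} t_j into K[t_1..t_d, s];
  target variables: None = s, Some j = t_j.\<close>
definition pi_mon :: "mon \<Rightarrow> (nat option \<Rightarrow>\<^sub>0 nat)" where
  "pi_mon m = (\<Sum>S\<in>Poly_Mapping.keys m. Poly_Mapping.single None (Poly_Mapping.lookup m S)
                 + (\<Sum>j\<in>S. Poly_Mapping.single (Some j) (Poly_Mapping.lookup m S)))"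

definition pi_map :: "'k::comm_ring_1 pol \<Rightarrow> (nat option \<Rightarrow>\<^sub>0 nat) \<Rightarrow>\<^sub>0 'k" where
  "pi_map p = (\<Sum>m\<in>Poly_Mapping.keys p. Poly_Mapping.single (pi_mon m) (Poly_Mapping.lookup p m))"

definition I_G :: "nat \<Rightarrow> nat set set \<Rightarrow> 'k::comm_ring_1 pol set" where
  "I_G d E = {p. in_ring (stable_sets d E) p \<and> pi_map p = 0}"

definition I_G_2 :: "nat \<Rightarrow> nat set set \<Rightarrow> 'k::comm_ring_1 pol set" where
  "I_G_2 d E = {p \<in> I_G d E. \<forall>m\<in>Poly_Mapping.keys p. mdeg m = 2}"

definition J_G :: "nat \<Rightarrow> nat set set \<Rightarrow> 'k::comm_ring_1 pol set" where
  "J_G d E = ideal_in (stable_sets d E)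
     {var S1 * var S2 - var S3 * var S4 | S1 S2 S3 S4.
        S1 \<in> stable_sets d E \<and> S2 \<in> stable_sets d E \<and> S3 \<in> stable_sets d E \<and> S4 \<in> stable_sets d E
        \<and> S1 \<inter> S2 = {} \<and> S3 \<inter> S4 = {} \<and> S1 \<union> S2 = S3 \<union> S4}"

definition L_G :: "nat \<Rightarrow> nat set set \<Rightarrow> 'k::comm_ring_1 pol set" where
  "L_G d E = ideal_in (stable_sets d E)
     {var (S - {i}) * var {i} - var S * var {} | S i.
        S \<in> stable_sets d E \<and> i \<in> S \<and> card S \<ge> 2}"

text \<open>Graded reverse lexicographic order induced by a ranking w of the variables:
  x_S > x_T iff w S > w T (w injective on the variables). Thus the "rightmost"
  entry of an exponent vector is the one of the variable with smallest w.
  u < v iff deg u < deg v, or degrees are equal and the entry of v - u at the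
  smallest variable where u and v differ is negative.\<close>
definition revlex_less :: "(nat set \<Rightarrow> nat) \<Rightarrow> mon \<Rightarrow> mon \<Rightarrow> bool" where
  "revlex_less w u v \<longleftrightarrow> mdeg u < mdeg v \<or>
     (mdeg u = mdeg v \<and> (\<exists>S. Poly_Mapping.lookup v S < Poly_Mapping.lookup u S \<and>
        (\<forall>T. Poly_Mapping.lookup u T \<noteq> Poly_Mapping.lookup v T \<longrightarrow> w S \<le> w T)))"

definition lead_mon :: "(nat set \<Rightarrow> nat) \<Rightarrow> 'k::comm_ring_1 pol \<Rightarrow> mon" where
  "lead_mon w p = (THE m. m \<in> Poly_Mapping.keys p \<and> (\<forall>m'\<in>Poly_Mapping.keys p. m' \<noteq> m \<longrightarrow> revlex_less w m' m))"

definition lead_coeff_mp :: "(nat set \<Rightarrow> nat) \<Rightarrow> 'k::comm_ring_1 pol \<Rightarrow> 'k" where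
  "lead_coeff_mp w p = Poly_Mapping.lookup p (lead_mon w p)"

definition init_ideal :: "nat set set \<Rightarrow> (nat set \<Rightarrow> nat) \<Rightarrow> 'k::comm_ring_1 pol set \<Rightarrow> 'k pol set" where
  "init_ideal V w I = ideal_in V {mon_poly (lead_mon w p) | p. p \<in> I \<and> p \<noteq> 0}"

definition lm_ideal :: "nat set set \<Rightarrow> (nat set \<Rightarrow> nat) \<Rightarrow> 'k::comm_ring_1 pol set \<Rightarrow> 'k pol set" where
  "lm_ideal V w G = ideal_in V {mon_poly (lead_mon w g) | g. g \<in> G \<and> g \<noteq> 0}"

definition is_groebner_basis :: "nat set set \<Rightarrow> (nat set \<Rightarrow> nat) \<Rightarrow> 'k::comm_ring_1 pol set \<Rightarrow> 'k pol set \<Rightarrow> bool" where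
  "is_groebner_basis V w I G \<longleftrightarrow> finite G \<and> G \<subseteq> I \<and> lm_ideal V w G = init_ideal V w I"

definition is_reduced_groebner_basis :: "nat set set \<Rightarrow> (nat set \<Rightarrow> nat) \<Rightarrow> 'k::comm_ring_1 pol set \<Rightarrow> 'k pol set \<Rightarrow> bool" where
  "is_reduced_groebner_basis V w I G \<longleftrightarrow> is_groebner_basis V w I G \<and>
     (\<forall>g\<in>G. g \<noteq> 0 \<and> lead_coeff_mp w g = 1) \<and>
     (\<forall>g\<in>G. \<forall>m\<in>Poly_Mapping.keys g. mon_poly m \<notin> lm_ideal V w (G - {g}))"

end

theory Submission
  imports Defs
begin

(* Modulo L_G one has x_\<emptyset>^|S| x_S \<equiv> x_\<emptyset> \<Prod>_{j\<in>S} x_{{j}}. Multiplying a monomial m by a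
  suitable power of x_\<emptyset> therefore makes it congruent to a normal form that only depends on
  \<pi>(m), so every f \<in> I_G satisfies x_\<emptyset>^K f \<in> L_G for large K. Each of the three ideals I lies
  between L_G and I_G and is generated by quadratics, hence its reduced Groebner basis consists
  of homogeneous polynomials. For homogeneous h not divisible by x_\<emptyset>, the revlex order with
  x_\<emptyset> as smallest variable forces x_\<emptyset> not to divide in(h). So if in(g) = x_\<emptyset>^k in(h) divides
  in(x_\<emptyset>^K f) = x_\<emptyset>^K in(f), then in(h) divides in(f). *)

abbreviation keys :: "('a \<Rightarrow>\<^sub>0 'b::zero) \<Rightarrow> 'a set" where
  "keys \<equiv> Poly_Mapping.keys"

abbreviation lookup :: "('a \<Rightarrow>\<^sub>0 'b::zero) \<Rightarrow> 'a \<Rightarrow> 'b" where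
  "lookup \<equiv> Poly_Mapping.lookup"

abbreviation single :: "'a \<Rightarrow> 'b::zero \<Rightarrow> 'a \<Rightarrow>\<^sub>0 'b" where
  "single \<equiv> Poly_Mapping.single"

section \<open>Monomials and the reverse lexicographic order\<close>

lemma keys_add_nat: "keys (a + b :: 'a \<Rightarrow>\<^sub>0 nat) = keys a \<union> keys b"
  by (auto simp: in_keys_iff lookup_add)

lemma mdeg_add: "mdeg (a + b) = mdeg a + mdeg b"
  unfolding mdeg_def by (rule setsum_keys_plus_distrib) auto

lemma mdeg_single [simp]: "mdeg (single S n) = n"
  by (simp add: mdeg_def)

lemma mdeg_zero [simp]: "mdeg 0 = 0"
  by (simp add: mdeg_def)

lemma mdeg_eq_0_iff: "mdeg m = 0 \<longleftrightarrow> m = 0"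
  by (auto simp: mdeg_def in_keys_iff intro!: poly_mapping_eqI)

lemma mdeg_sum: "mdeg (sum f A) = (\<Sum>a\<in>A. mdeg (f a))"
  by (induction A rule: infinite_finite_induct) (auto simp: mdeg_add)

lemma mon_dvd_cancel_single:
  fixes a b r :: mon
  assumes "single S K + a = single S k + b + r" and "lookup b S = 0"
  obtains r' where "a = b + r'"
proof
  have "lookup b T \<le> lookup a T" for T
    using arg_cong[OF assms(1), of "\<lambda>m. lookup m T"] assms(2)
    by (cases "T = S") (auto simp: lookup_add lookup_single)
  then show "a = b + (a - b)"
    by (intro poly_mapping_eqI) (simp add: lookup_add lookup_minus)
qed

lemma revlex_less_add_left: "revlex_less w (a + u) (a + v) \<longleftrightarrow> revlex_less w u v"
  by (simp add: revlex_less_def mdeg_add lookup_add)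

lemma lookup_ne_in_keys: "lookup u S \<noteq> lookup v S \<Longrightarrow> S \<in> keys u \<union> keys v"
  by (auto simp: in_keys_iff)

lemma revlex_less_asym:
  assumes inj: "inj_on w V" and "keys u \<subseteq> V" "keys v \<subseteq> V" and uv: "revlex_less w u v"
  shows "\<not> revlex_less w v u"
proof
  assume vu: "revlex_less w v u"
  with uv have "mdeg u = mdeg v" by (auto simp: revlex_less_def)
  with uv vu obtain S1 S2
    where S1: "lookup v S1 < lookup u S1" "\<forall>T. lookup u T \<noteq> lookup v T \<longrightarrow> w S1 \<le> w T"
      and S2: "lookup u S2 < lookup v S2" "\<forall>T. lookup v T \<noteq> lookup u T \<longrightarrow> w S2 \<le> w T"
    by (auto simp: revlex_less_def)
  have "S1 \<in> V" "S2 \<in> V"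
    using lookup_ne_in_keys[of u S1 v] lookup_ne_in_keys[of u S2 v] S1 S2 assms by auto
  moreover have "w S1 = w S2"
    using S1(1) S2(1) S1(2)[rule_format, of S2] S2(2)[rule_format, of S1] by simp
  ultimately have "S1 = S2" using inj by (auto dest: inj_onD)
  with S1 S2 show False by simp
qed

lemma revlex_less_total:
  assumes inj: "inj_on w V" and "keys u \<subseteq> V" "keys v \<subseteq> V" and "u \<noteq> v"
  shows "revlex_less w u v \<or> revlex_less w v u"
proof (cases "mdeg u = mdeg v")
  case False
  then show ?thesis by (auto simp: revlex_less_def)
next
  case True
  define D where "D = {T. lookup u T \<noteq> lookup v T}"
  have "finite D"
    unfolding D_def by (rule finite_subset[of _ "keys u \<union> keys v"]) (auto simp: in_keys_iff)
  moreover have "D \<noteq> {}" using \<open>u \<noteq> v\<close> unfolding D_def by (auto intro: poly_mapping_eqI)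
  ultimately obtain S where S: "S \<in> D" and "w S = Min (w ` D)"
    by (metis (no_types, lifting) Min_in finite_imageI image_iff image_is_empty)
  then have min: "\<forall>T. lookup u T \<noteq> lookup v T \<longrightarrow> w S \<le> w T"
    using \<open>finite D\<close> by (auto simp: D_def)
  from S have "lookup u S < lookup v S \<or> lookup v S < lookup u S" by (auto simp: D_def)
  with min True show ?thesis unfolding revlex_less_def by (metis (no_types))
qed

lemma revlex_less_trans:
  assumes inj: "inj_on w V" and "keys u \<subseteq> V" "keys v \<subseteq> V" "keys x \<subseteq> V"
    and uv: "revlex_less w u v" and vx: "revlex_less w v x"
  shows "revlex_less w u x"
proof (cases "mdeg u = mdeg v \<and> mdeg v = mdeg x")
  case False
  then show ?thesis using uv vx by (auto simp: revlex_less_def)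
next
  case True
  from uv vx True obtain S1 S2
    where S1: "lookup v S1 < lookup u S1" "\<forall>T. lookup u T \<noteq> lookup v T \<longrightarrow> w S1 \<le> w T"
      and S2: "lookup x S2 < lookup v S2" "\<forall>T. lookup v T \<noteq> lookup x T \<longrightarrow> w S2 \<le> w T"
    by (auto simp: revlex_less_def)
  have "S1 \<in> V" "S2 \<in> V"
    using lookup_ne_in_keys[of u S1 v] lookup_ne_in_keys[of v S2 x] S1 S2 assms by auto
  have "\<exists>S. lookup x S < lookup u S \<and> (\<forall>T. lookup u T \<noteq> lookup x T \<longrightarrow> w S \<le> w T)"
  proof (cases "w S1 < w S2")
    case True
    then have "lookup v S1 = lookup x S1" using S2 by force
    then show ?thesis using S1 S2 True by (metis le_less_trans less_le_not_le nat_le_linear)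
  next
    case False
    show ?thesis
    proof (cases "w S2 < w S1")
      case True
      then have "lookup u S2 = lookup v S2" using S1 by force
      then show ?thesis using S1 S2 True by (metis le_less_trans less_le_not_le nat_le_linear)
    next
      case False
      with \<open>\<not> w S1 < w S2\<close> have "S1 = S2"
        using inj \<open>S1 \<in> V\<close> \<open>S2 \<in> V\<close> by (auto dest: inj_onD)
      then show ?thesis using S1 S2 by (metis order.strict_trans)
    qed
  qed
  then show ?thesis using True by (simp add: revlex_less_def)
qed

lemma finite_has_revlex_greatest:
  assumes inj: "inj_on w V" and "finite A" "A \<noteq> {}" and "\<forall>m\<in>A. keys m \<subseteq> V"
  shows "\<exists>m\<in>A. \<forall>m'\<in>A. m' \<noteq> m \<longrightarrow> revlex_less w m' m"
  using assms(2-4)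
proof (induction A rule: finite_ne_induct)
  case (singleton x)
  then show ?case by auto
next
  case (insert x F)
  then obtain m where m: "m \<in> F" "\<forall>m'\<in>F. m' \<noteq> m \<longrightarrow> revlex_less w m' m" by auto
  consider "x = m" | "revlex_less w x m" | "revlex_less w m x"
    using revlex_less_total[OF inj, of x m] insert.prems m by auto
  then show ?case
  proof cases
    case 3
    have "revlex_less w m' x" if "m' \<in> F" for m'
      using revlex_less_trans[OF inj, of m' m x] 3 m that insert.prems by (cases "m' = m") auto
    then have "\<forall>m'\<in>insert x F. m' \<noteq> x \<longrightarrow> revlex_less w m' x" by blast
    then show ?thesis by auto
  qed (use m in auto)
qed

lemma lead_mon_eqI:
  assumes inj: "inj_on w V" and p: "in_ring V p" and m: "m \<in> keys p"
    and greatest: "\<forall>m'\<in>keys p. m' \<noteq> m \<longrightarrow> revlex_less w m' m"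
  shows "lead_mon w p = m"
  unfolding lead_mon_def
proof (rule the_equality)
  show "m \<in> keys p \<and> (\<forall>m'\<in>keys p. m' \<noteq> m \<longrightarrow> revlex_less w m' m)"
    using m greatest by blast
  fix m2 assume m2: "m2 \<in> keys p \<and> (\<forall>m'\<in>keys p. m' \<noteq> m2 \<longrightarrow> revlex_less w m' m2)"
  show "m2 = m"
  proof (rule ccontr)
    assume "m2 \<noteq> m"
    then have "revlex_less w m2 m" "revlex_less w m m2" using m2 greatest m by auto
    moreover have "keys m \<subseteq> V" "keys m2 \<subseteq> V" using p m m2 by (auto simp: in_ring_def)
    ultimately show False using revlex_less_asym[OF inj] by blast
  qed
qed

lemma
  assumes inj: "inj_on w V" and p: "in_ring V p" "p \<noteq> 0"
  shows lead_mon_in_keys: "lead_mon w p \<in> keys p"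
    and revlex_less_lead_mon: "m \<in> keys p \<Longrightarrow> m \<noteq> lead_mon w p \<Longrightarrow> revlex_less w m (lead_mon w p)"
proof -
  obtain m where m: "m \<in> keys p" and greatest: "\<forall>m'\<in>keys p. m' \<noteq> m \<longrightarrow> revlex_less w m' m"
    using finite_has_revlex_greatest[OF inj, of "keys p"] p by (auto simp: in_ring_def)
  moreover have "lead_mon w p = m" by (rule lead_mon_eqI[OF inj p(1) m greatest])
  ultimately show "lead_mon w p \<in> keys p"
    and "m \<in> keys p \<Longrightarrow> m \<noteq> lead_mon w p \<Longrightarrow> revlex_less w m (lead_mon w p)" for m
    by simp_all
qed

section \<open>Polynomials and ideals\<close>

lemma sum_single_lookup: "(\<Sum>m\<in>keys p. single m (lookup p m)) = p"
  by (rule poly_mapping_eqI) (auto simp: lookup_sum lookup_single when_def in_keys_iff)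

lemma single_sum: "single k (sum g A) = (\<Sum>x\<in>A. single k (g x))"
  by (induction A rule: infinite_finite_induct) (auto simp: single_add)

lemma single_mult_eq_sum: "single a c * p = (\<Sum>m\<in>keys p. single (a + m) (c * lookup p m))"
proof -
  have "single a c * p = single a c * (\<Sum>m\<in>keys p. single m (lookup p m))"
    by (simp add: sum_single_lookup)
  also have "\<dots> = (\<Sum>m\<in>keys p. single (a + m) (c * lookup p m))"
    by (simp add: sum_distrib_left mult_single)
  finally show ?thesis .
qed

lemma lookup_single_mult_add:
  "lookup (single (a :: 'a \<Rightarrow>\<^sub>0 nat) c * p) (a + m) = (c :: 'k::comm_ring_1) * lookup p m"
proof -
  have "lookup (single a c * p) (a + m) = (\<Sum>m'\<in>keys p. if m' = m then c * lookup p m' else 0)"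
    by (simp add: single_mult_eq_sum lookup_sum lookup_single when_def)
  also have "\<dots> = c * lookup p m" by (auto simp: in_keys_iff)
  finally show ?thesis .
qed

lemma keys_single_one_mult:
  "keys (single (a :: 'a \<Rightarrow>\<^sub>0 nat) (1 :: 'k::comm_ring_1) * p) = (\<lambda>m. a + m) ` keys p"
proof
  show "keys (single a (1 :: 'k) * p) \<subseteq> (\<lambda>m. a + m) ` keys p"
    using keys_mult[of "single a (1 :: 'k)" p] by auto
  show "(\<lambda>m. a + m) ` keys p \<subseteq> keys (single a (1 :: 'k) * p)"
    by (auto simp: in_keys_iff lookup_single_mult_add)
qed

lemma single_one_mult_cancel:
  assumes "single (a :: 'a \<Rightarrow>\<^sub>0 nat) (1 :: 'k::comm_ring_1) * p = single a 1 * q"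
  shows "p = q"
proof (rule poly_mapping_eqI)
  fix m
  show "lookup p m = lookup q m"
    using lookup_single_mult_add[of a "1 :: 'k" p m] lookup_single_mult_add[of a "1 :: 'k" q m] assms
    by simp
qed

lemma single_one_mult_eq_0_iff:
  "single (a :: 'a \<Rightarrow>\<^sub>0 nat) (1 :: 'k::comm_ring_1) * p = 0 \<longleftrightarrow> p = 0"
  using single_one_mult_cancel[of a p 0] by auto

lemma mon_poly_mult: "mon_poly a * mon_poly b = mon_poly (a + b)"
  by (simp add: mon_poly_def mult_single)

lemma keys_mon_poly [simp]: "keys (mon_poly m :: 'k::comm_ring_1 pol) = {m}"
  by (simp add: mon_poly_def)

lemma var_power: "(var S :: 'k::comm_ring_1 pol) ^ k = single (single S k) 1"
proof (induction k)
  case 0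
  then show ?case by (simp add: one_poly_mapping.abs_eq single.abs_eq)
next
  case (Suc k)
  then show ?case by (simp add: var_def mult_single single_add[symmetric] add.commute)
qed

lemma var_dvdI:
  assumes "\<forall>m\<in>keys h. 1 \<le> lookup m S"
  shows "(var S :: 'k::comm_ring_1 pol) dvd h"
proof
  have "var S * (\<Sum>m\<in>keys h. single (m - single S 1) (lookup h m))
      = (\<Sum>m\<in>keys h. single (single S 1 + (m - single S 1)) (lookup h m))"
    by (simp add: var_def sum_distrib_left mult_single)
  also have "\<dots> = (\<Sum>m\<in>keys h. single m (lookup h m))"
  proof (rule sum.cong[OF refl])
    fix m assume "m \<in> keys h"
    then have "single S 1 + (m - single S 1) = m"
      using assms by (intro poly_mapping_eqI) (auto simp: lookup_add lookup_minus lookup_single when_def)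
    then show "single (single S 1 + (m - single S 1)) (lookup h m) = single m (lookup h m)" by simp
  qed
  finally show "h = var S * (\<Sum>m\<in>keys h. single (m - single S 1) (lookup h m))"
    by (simp add: sum_single_lookup)
qed

lemma var_power_dvd_imp_le_lookup:
  assumes "(var S :: 'k::comm_ring_1 pol) ^ k dvd g" "m \<in> keys g"
  shows "k \<le> lookup m S"
proof -
  obtain q where "g = var S ^ k * q" using assms(1) by (auto simp: dvd_def)
  then have "keys g = (\<lambda>m. single S k + m) ` keys q" by (simp add: var_power keys_single_one_mult)
  then show ?thesis using assms(2) by (auto simp: lookup_add)
qed

lemma exists_max_var_power_dvd:
  assumes "(g :: 'k::comm_ring_1 pol) \<noteq> 0"
  obtains k where "var S ^ k dvd g" "\<not> var S ^ (k + 1) dvd g"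
proof -
  obtain m where m: "m \<in> keys g" using assms by (metis keys_eq_empty ex_in_conv)
  have "\<not> var S ^ (lookup m S + 1) dvd g"
    using var_power_dvd_imp_le_lookup[OF _ m, of S "lookup m S + 1"] by auto
  then have ex: "\<exists>j. \<not> var S ^ j dvd g" by blast
  define j where "j = (LEAST j. \<not> var S ^ j dvd g)"
  have nj: "\<not> var S ^ j dvd g" using LeastI_ex[OF ex] j_def by simp
  then have "j \<noteq> 0" by (metis one_dvd power_0)
  moreover have "var S ^ (j - 1) dvd g"
    using not_less_Least[of "j - 1" "\<lambda>j. \<not> var S ^ j dvd g"] \<open>j \<noteq> 0\<close> j_def by auto
  ultimately show ?thesis using nj that[of "j - 1"] by simp
qed

lemma in_ring_add: "in_ring V p \<Longrightarrow> in_ring V q \<Longrightarrow> in_ring V (p + q)"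
  using keys_add[of p q] by (auto simp: in_ring_def)

lemma in_ring_diff: "in_ring V p \<Longrightarrow> in_ring V q \<Longrightarrow> in_ring V (p - q)"
  using keys_diff[of p q] by (auto simp: in_ring_def)

lemma in_ring_mult:
  assumes "in_ring V p" "in_ring V q"
  shows "in_ring V (p * q)"
  unfolding in_ring_def
proof
  fix m assume "m \<in> keys (p * q)"
  then obtain a b where "m = a + b" "a \<in> keys p" "b \<in> keys q" using keys_mult[of p q] by blast
  then show "keys m \<subseteq> V" using assms keys_add_nat[of a b] unfolding in_ring_def by blast
qed

lemma in_ring_single: "keys m \<subseteq> V \<Longrightarrow> in_ring V (single m c)"
  by (simp add: in_ring_def)

lemma in_ring_var: "S \<in> V \<Longrightarrow> in_ring V (var S)"
  by (simp add: var_def in_ring_def)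

lemma in_ring_mon_poly: "keys m \<subseteq> V \<Longrightarrow> in_ring V (mon_poly m)"
  by (simp add: mon_poly_def in_ring_def)

lemma in_ring_single_mult_iff:
  "in_ring V (single a (1 :: 'k::comm_ring_1) * p) \<longleftrightarrow> in_ring V p" if "keys a \<subseteq> V"
  using that by (auto simp: in_ring_def keys_single_one_mult keys_add_nat)

lemma ideal_in_mono: "F \<subseteq> ideal_in V F' \<Longrightarrow> ideal_in V F \<subseteq> ideal_in V F'"
proof
  fix p assume F: "F \<subseteq> ideal_in V F'" and p: "p \<in> ideal_in V F"
  from p show "p \<in> ideal_in V F'"
    by (induction rule: ideal_in.induct) (use F in \<open>auto intro: ideal_in.intros\<close>)
qed

lemma ideal_in_uminus: "(p :: 'k::comm_ring_1 pol) \<in> ideal_in V F \<Longrightarrow> - p \<in> ideal_in V F"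
  using ideal_in.mult[OF in_ring_single[of 0 V "- 1"]] by (simp add: single_uminus)

lemma ideal_in_diff:
  "(p :: 'k::comm_ring_1 pol) \<in> ideal_in V F \<Longrightarrow> q \<in> ideal_in V F \<Longrightarrow> p - q \<in> ideal_in V F"
  using ideal_in.add[of p V F "- q"] ideal_in_uminus by fastforce

lemma ideal_in_sum: "(\<And>a. a \<in> A \<Longrightarrow> f a \<in> ideal_in V F) \<Longrightarrow> sum f A \<in> ideal_in V F"
  by (induction A rule: infinite_finite_induct) (auto intro: ideal_in.intros)

lemma ideal_in_mult_right: "p \<in> ideal_in V F \<Longrightarrow> in_ring V q \<Longrightarrow> p * q \<in> ideal_in V F"
  by (metis ideal_in.mult mult.commute)

lemma in_ring_ideal_in:
  assumes "\<forall>f\<in>F. in_ring V f" and "p \<in> ideal_in V F"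
  shows "in_ring V p"
  using assms(2)
proof (induction rule: ideal_in.induct)
  case zero
  then show ?case by (simp add: in_ring_def)
qed (use assms(1) in \<open>auto intro: in_ring_add in_ring_mult\<close>)

lemma ideal_in_mult_diff:
  assumes "a - b \<in> ideal_in V F" "c - d \<in> ideal_in V F" "in_ring V b" "in_ring V c"
  shows "a * c - b * d \<in> ideal_in V F"
proof -
  have "a * c - b * d = (a - b) * c + b * (c - d)" by (simp add: algebra_simps)
  then show ?thesis using assms by (metis ideal_in.add ideal_in.mult ideal_in_mult_right)
qed

lemma lead_mon_single_mult:
  assumes inj: "inj_on w V" and p: "in_ring V p" "p \<noteq> 0" and a: "keys a \<subseteq> V"
  shows "lead_mon w (single a (1 :: 'k::comm_ring_1) * p) = a + lead_mon w p"
proof (rule lead_mon_eqI[OF inj])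
  show "in_ring V (single a (1 :: 'k) * p)" using in_ring_mult[OF in_ring_single[OF a] p(1)] .
  show "a + lead_mon w p \<in> keys (single a (1 :: 'k) * p)"
    using lead_mon_in_keys[OF inj p] by (simp add: keys_single_one_mult)
  show "\<forall>m'\<in>keys (single a (1 :: 'k) * p). m' \<noteq> a + lead_mon w p \<longrightarrow> revlex_less w m' (a + lead_mon w p)"
    using revlex_less_lead_mon[OF inj p] by (auto simp: keys_single_one_mult revlex_less_add_left)
qed

section \<open>The toric ideal and its quadratic subideals\<close>

definition poly_pushforward :: "('a \<Rightarrow> 'b) \<Rightarrow> ('a \<Rightarrow>\<^sub>0 'c::comm_ring_1) \<Rightarrow> 'b \<Rightarrow>\<^sub>0 'c" where
  "poly_pushforward \<phi> p = (\<Sum>m\<in>keys p. single (\<phi> m) (lookup p m))"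

lemma poly_pushforward_add: "poly_pushforward \<phi> (p + q) = poly_pushforward \<phi> p + poly_pushforward \<phi> q"
  unfolding poly_pushforward_def by (rule setsum_keys_plus_distrib) (auto simp: single_add)

lemma poly_pushforward_zero [simp]: "poly_pushforward \<phi> 0 = 0"
  by (simp add: poly_pushforward_def)

lemma poly_pushforward_single [simp]: "poly_pushforward \<phi> (single a c) = single (\<phi> a) c"
  by (simp add: poly_pushforward_def)

lemma poly_pushforward_sum: "poly_pushforward \<phi> (sum f A) = (\<Sum>a\<in>A. poly_pushforward \<phi> (f a))"
  by (induction A rule: infinite_finite_induct) (auto simp: poly_pushforward_add)

lemma poly_pushforward_diff: "poly_pushforward \<phi> (p - q) = poly_pushforward \<phi> p - poly_pushforward \<phi> q"
  by (metis add_diff_cancel_right' diff_add_cancel poly_pushforward_add)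

lemma poly_pushforward_mult:
  assumes hom: "\<And>a b. \<phi> (a + b) = \<phi> a + \<phi> b"
  shows "poly_pushforward \<phi> (p * q) = poly_pushforward \<phi> p * poly_pushforward \<phi> q"
proof -
  have "p * q = (\<Sum>a\<in>keys p. single a (lookup p a)) * (\<Sum>b\<in>keys q. single b (lookup q b))"
    by (simp add: sum_single_lookup)
  also have "\<dots> = (\<Sum>a\<in>keys p. \<Sum>b\<in>keys q. single (a + b) (lookup p a * lookup q b))"
    by (simp add: sum_product mult_single)
  finally have "poly_pushforward \<phi> (p * q)
      = (\<Sum>a\<in>keys p. \<Sum>b\<in>keys q. single (\<phi> a + \<phi> b) (lookup p a * lookup q b))"
    by (simp add: poly_pushforward_sum hom)
  also have "\<dots> = poly_pushforward \<phi> p * poly_pushforward \<phi> q"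
    by (simp add: poly_pushforward_def sum_product mult_single)
  finally show ?thesis .
qed

lemma lookup_poly_pushforward:
  "lookup (poly_pushforward \<phi> p) e = (\<Sum>m\<in>{m \<in> keys p. \<phi> m = e}. lookup p m)"
  by (simp add: poly_pushforward_def lookup_sum lookup_single when_def sum.inter_filter eq_commute)

lemma poly_pushforward_eq_0_if_factors_through:
  assumes "poly_pushforward \<psi> p = 0" and "\<And>a b. \<psi> a = \<psi> b \<Longrightarrow> \<phi> a = \<phi> b"
  shows "poly_pushforward \<phi> p = 0"
proof -
  have "poly_pushforward \<phi> p
      = (\<Sum>e\<in>\<psi> ` keys p. \<Sum>m\<in>{m \<in> keys p. \<psi> m = e}. single (\<phi> m) (lookup p m))"
    unfolding poly_pushforward_def by (rule sum.image_gen) simp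
  also have "\<dots> = 0"
  proof (rule sum.neutral, rule ballI)
    fix e assume "e \<in> \<psi> ` keys p"
    then obtain m0 where m0: "e = \<psi> m0" by auto
    have "(\<Sum>m\<in>{m \<in> keys p. \<psi> m = e}. single (\<phi> m) (lookup p m))
        = (\<Sum>m\<in>{m \<in> keys p. \<psi> m = e}. single (\<phi> m0) (lookup p m))"
    proof (rule sum.cong[OF refl])
      fix m assume "m \<in> {m \<in> keys p. \<psi> m = e}"
      then have "\<psi> m = \<psi> m0" using m0 by simp
      then have "\<phi> m = \<phi> m0" by (rule assms(2))
      then show "single (\<phi> m) (lookup p m) = single (\<phi> m0) (lookup p m)" by simp
    qed
    also have "\<dots> = single (\<phi> m0) (lookup (poly_pushforward \<psi> p) e)"
      by (simp add: lookup_poly_pushforward single_sum)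
    finally show "(\<Sum>m\<in>{m \<in> keys p. \<psi> m = e}. single (\<phi> m) (lookup p m)) = 0"
      using assms(1) by simp
  qed
  finally show ?thesis .
qed

lemma pi_mon_add: "pi_mon (a + b) = pi_mon a + pi_mon b"
  unfolding pi_mon_def by (rule setsum_keys_plus_distrib) (auto simp: single_add sum.distrib add_ac)

lemma pi_mon_single: "pi_mon (single S n) = single None n + (\<Sum>j\<in>S. single (Some j) n)"
  by (simp add: pi_mon_def)

lemma pi_map_eq_pushforward: "pi_map p = poly_pushforward pi_mon p"
  by (simp add: pi_map_def poly_pushforward_def)

lemma pi_map_mult: "pi_map (p * q) = pi_map p * pi_map q"
  by (simp add: pi_map_eq_pushforward poly_pushforward_mult pi_mon_add)

lemma stable_sets_subset_closed: "S \<in> stable_sets d E \<Longrightarrow> T \<subseteq> S \<Longrightarrow> T \<in> stable_sets d E"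
  unfolding stable_sets_def by blast

lemma empty_in_stable_sets: "simple_graph d E \<Longrightarrow> {} \<in> stable_sets d E"
  by (auto simp: stable_sets_def simple_graph_def)

lemma finite_stable_set: "S \<in> stable_sets d E \<Longrightarrow> finite S"
  by (auto simp: stable_sets_def intro: finite_subset)

lemma ideal_in_subset_I_G:
  assumes "F \<subseteq> I_G d E"
  shows "ideal_in (stable_sets d E) F \<subseteq> I_G d E"
proof
  fix p assume "p \<in> ideal_in (stable_sets d E) F"
  then show "p \<in> I_G d E"
  proof (induction rule: ideal_in.induct)
    case zero
    then show ?case by (simp add: I_G_def in_ring_def pi_map_eq_pushforward)
  next
    case (gen f)
    then show ?case using assms by blast
  next
    case (add p q)
    then show ?case by (simp add: I_G_def in_ring_add pi_map_eq_pushforward poly_pushforward_add)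
  next
    case (mult q p)
    then show ?case by (simp add: I_G_def in_ring_mult pi_map_mult)
  qed
qed

lemma I_G_var_power_mult_cancel:
  fixes h :: "'k::comm_ring_1 pol"
  assumes "var S ^ k * h \<in> I_G d E"
  shows "h \<in> I_G d E"
proof -
  have "in_ring (stable_sets d E) (single (single S k) (1 :: 'k) * h)" "pi_map (var S ^ k * h) = 0"
    using assms by (simp_all add: I_G_def var_power)
  then have "in_ring (stable_sets d E) h"
    by (auto simp: in_ring_def keys_single_one_mult keys_add_nat)
  moreover have "pi_map (var S ^ k * h) = single (pi_mon (single S k)) 1 * pi_map h"
    unfolding pi_map_mult by (simp add: var_power pi_map_eq_pushforward)
  then have "pi_map h = 0"
    using \<open>pi_map (var S ^ k * h) = 0\<close> by (simp add: single_one_mult_eq_0_iff)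
  ultimately show ?thesis by (simp add: I_G_def)
qed

definition J_G_generators :: "nat \<Rightarrow> nat set set \<Rightarrow> 'k::comm_ring_1 pol set" where
  "J_G_generators d E = {var S1 * var S2 - var S3 * var S4 | S1 S2 S3 S4.
     S1 \<in> stable_sets d E \<and> S2 \<in> stable_sets d E \<and> S3 \<in> stable_sets d E \<and> S4 \<in> stable_sets d E
     \<and> S1 \<inter> S2 = {} \<and> S3 \<inter> S4 = {} \<and> S1 \<union> S2 = S3 \<union> S4}"

definition L_G_generators :: "nat \<Rightarrow> nat set set \<Rightarrow> 'k::comm_ring_1 pol set" where
  "L_G_generators d E = {var (S - {i}) * var {i} - var S * var {} | S i.
     S \<in> stable_sets d E \<and> i \<in> S \<and> card S \<ge> 2}"

lemma J_G_eq: "J_G d E = ideal_in (stable_sets d E) (J_G_generators d E)"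
  by (simp add: J_G_def J_G_generators_def)

lemma L_G_eq: "L_G d E = ideal_in (stable_sets d E) (L_G_generators d E)"
  by (simp add: L_G_def L_G_generators_def)

lemma var_mult: "var S1 * var S2 = single (single S1 1 + single S2 1) 1"
  by (simp add: var_def mult_single)

lemma pi_map_var_mult:
  assumes "finite S1" "finite S2" "S1 \<inter> S2 = {}"
  shows "pi_map (var S1 * var S2 :: 'k::comm_ring_1 pol)
           = single (single None 2 + (\<Sum>j\<in>S1 \<union> S2. single (Some j) 1)) 1"
proof -
  have two: "single None (2 :: nat) = single None 1 + single None 1" by (metis one_add_one single_add)
  have "pi_mon (single S1 1 + single S2 1) = single None 2 + (\<Sum>j\<in>S1 \<union> S2. single (Some j) 1)"
    using assms by (simp add: pi_mon_add pi_mon_single sum.union_disjoint two add_ac)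
  then show ?thesis by (simp add: var_mult pi_map_eq_pushforward)
qed

lemma J_G_generators_subset_I_G_2: "J_G_generators d E \<subseteq> (I_G_2 d E :: 'k::comm_ring_1 pol set)"
proof
  fix f :: "'k pol" assume "f \<in> J_G_generators d E"
  then obtain S1 S2 S3 S4 where f: "f = var S1 * var S2 - var S3 * var S4"
    and st: "S1 \<in> stable_sets d E" "S2 \<in> stable_sets d E" "S3 \<in> stable_sets d E" "S4 \<in> stable_sets d E"
    and disj: "S1 \<inter> S2 = {}" "S3 \<inter> S4 = {}" and union: "S1 \<union> S2 = S3 \<union> S4"
    unfolding J_G_generators_def mem_Collect_eq by (elim exE conjE)
  have fin: "finite S1" "finite S2" "finite S3" "finite S4" using st finite_stable_set by auto
  have "in_ring (stable_sets d E) f"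
    unfolding f by (intro in_ring_diff in_ring_mult in_ring_var st)
  moreover have "pi_map f = 0"
    unfolding f pi_map_eq_pushforward poly_pushforward_diff
    by (simp add: pi_map_eq_pushforward[symmetric] pi_map_var_mult fin disj union)
  moreover have "mdeg m = 2" if "m \<in> keys f" for m
  proof -
    have "m \<in> keys (var S1 * var S2 :: 'k pol) \<union> keys (var S3 * var S4 :: 'k pol)"
      using that keys_diff[of "var S1 * var S2 :: 'k pol" "var S3 * var S4"] unfolding f by blast
    then have "m = single S1 1 + single S2 1 \<or> m = single S3 1 + single S4 1"
      unfolding var_mult by (simp split: if_splits) blast
    then show ?thesis by (auto simp: mdeg_add)
  qed
  ultimately show "f \<in> I_G_2 d E" by (simp add: I_G_2_def I_G_def)
qed

lemma L_G_generators_subset_J_G_generators: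
  assumes "simple_graph d E"
  shows "L_G_generators d E \<subseteq> (J_G_generators d E :: 'k::comm_ring_1 pol set)"
proof
  fix f :: "'k pol" assume "f \<in> L_G_generators d E"
  then obtain S i where f: "f = var (S - {i}) * var {i} - var S * var {}"
    and S: "S \<in> stable_sets d E" "i \<in> S"
    unfolding L_G_generators_def mem_Collect_eq by (elim exE conjE)
  have "S - {i} \<in> stable_sets d E" "{i} \<in> stable_sets d E" "{} \<in> stable_sets d E"
    using S stable_sets_subset_closed empty_in_stable_sets[OF assms] by auto
  then show "f \<in> J_G_generators d E"
    unfolding J_G_generators_def f mem_Collect_eq using S
    by (intro exI[of _ "S - {i}"] exI[of _ "{i}"] exI[of _ S] exI[of _ "{}"]) auto
qed

lemma
  assumes "simple_graph d E"
  shows L_G_subset_J_G: "L_G d E \<subseteq> (J_G d E :: 'k::comm_ring_1 pol set)"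
    and J_G_subset_ideal_I_G_2: "J_G d E \<subseteq> ideal_in (stable_sets d E) (I_G_2 d E :: 'k pol set)"
    and ideal_I_G_2_subset_I_G: "ideal_in (stable_sets d E) (I_G_2 d E) \<subseteq> (I_G d E :: 'k pol set)"
proof -
  show "L_G d E \<subseteq> (J_G d E :: 'k pol set)"
    unfolding L_G_eq J_G_eq using L_G_generators_subset_J_G_generators[OF assms]
    by (intro ideal_in_mono) (auto intro: ideal_in.gen)
  show "J_G d E \<subseteq> ideal_in (stable_sets d E) (I_G_2 d E :: 'k pol set)"
    unfolding J_G_eq using J_G_generators_subset_I_G_2
    by (intro ideal_in_mono) (auto intro: ideal_in.gen)
  show "ideal_in (stable_sets d E) (I_G_2 d E) \<subseteq> (I_G d E :: 'k pol set)"
    by (rule ideal_in_subset_I_G) (auto simp: I_G_2_def)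
qed

lemma quadratic_ideal_cases:
  fixes I :: "'k::comm_ring_1 pol set"
  assumes graph: "simple_graph d E"
    and I: "I \<in> {ideal_in (stable_sets d E) (I_G_2 d E), J_G d E, L_G d E}"
  obtains F where "I = ideal_in (stable_sets d E) F" "F \<subseteq> I_G_2 d E"
    and "L_G d E \<subseteq> I" "I \<subseteq> I_G d E"
proof -
  note chain = L_G_subset_J_G[OF graph] J_G_subset_ideal_I_G_2[OF graph] ideal_I_G_2_subset_I_G[OF graph]
  note generators = J_G_generators_subset_I_G_2 L_G_generators_subset_J_G_generators[OF graph]
  from I consider "I = ideal_in (stable_sets d E) (I_G_2 d E)" | "I = J_G d E" | "I = L_G d E"
    by blast
  then show ?thesis
  proof cases
    case 1
    then show ?thesis using that chain by blast
  next
    case 2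
    then show ?thesis using that[of "J_G_generators d E"] chain generators by (simp add: J_G_eq) blast
  next
    case 3
    then show ?thesis using that[of "L_G_generators d E"] chain generators by (simp add: L_G_eq) blast
  qed
qed

section \<open>Saturation of \<open>L_G\<close> by \<open>x_\<emptyset>\<close>\<close>

definition spread_mon :: "mon \<Rightarrow> mon" where
  "spread_mon m = (\<Sum>S\<in>keys m. \<Sum>j\<in>S. single {j} (lookup m S))"

definition mon_weight :: "mon \<Rightarrow> nat" where
  "mon_weight m = mdeg (spread_mon m)"

lemma spread_mon_add: "spread_mon (a + b) = spread_mon a + spread_mon b"
  unfolding spread_mon_def by (rule setsum_keys_plus_distrib) (auto simp: single_add sum.distrib)

lemma spread_mon_single: "spread_mon (single S n) = (\<Sum>j\<in>S. single {j} n)"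
  by (simp add: spread_mon_def)

lemma mon_weight_add: "mon_weight (a + b) = mon_weight a + mon_weight b"
  by (simp add: mon_weight_def spread_mon_add mdeg_add)

lemma mon_weight_single: "finite S \<Longrightarrow> mon_weight (single S 1) = card S"
  by (simp add: mon_weight_def spread_mon_single mdeg_sum)

lemma keys_single_empty_add:
  fixes m :: mon
  shows "simple_graph d E \<Longrightarrow> keys m \<subseteq> stable_sets d E \<Longrightarrow> keys (single {} k + m) \<subseteq> stable_sets d E"
  using empty_in_stable_sets keys_add_nat[of "single {} k" m] by auto

lemma keys_spread_mon:
  shows "simple_graph d E \<Longrightarrow> keys m \<subseteq> stable_sets d E \<Longrightarrow> keys (spread_mon m) \<subseteq> stable_sets d E"
  unfolding spread_mon_def using stable_sets_subset_closed
  by (auto dest!: subsetD[OF keys_sum] split: if_splits)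

lemma L_G_var_congruence_insert:
  assumes graph: "simple_graph d E" and S: "insert i T \<in> stable_sets d E" and "i \<notin> T" "T \<noteq> {}"
    and IH: "(mon_poly (single {} (card T) + single T 1)
          - mon_poly (single {} 1 + spread_mon (single T 1)) :: 'k::comm_ring_1 pol) \<in> L_G d E"
  shows "(mon_poly (single {} (card (insert i T)) + single (insert i T) 1)
          - mon_poly (single {} 1 + spread_mon (single (insert i T) 1)) :: 'k pol) \<in> L_G d E"
proof -
  let ?S = "insert i T"
  have "finite ?S" using finite_stable_set[OF S] .
  then have card_S: "card ?S = Suc (card T)" "2 \<le> card ?S"
    using \<open>i \<notin> T\<close> \<open>T \<noteq> {}\<close> by (auto simp: Suc_le_eq card_gt_0_iff)
  have "(var T * var {i} - var ?S * var {} :: 'k pol) \<in> L_G d E"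
    unfolding L_G_def using S card_S(2) \<open>i \<notin> T\<close>
    by (intro ideal_in.gen CollectI exI[of _ ?S] exI[of _ i]) auto
  moreover have "in_ring (stable_sets d E) (mon_poly (single {} (card T)) :: 'k pol)"
    using empty_in_stable_sets[OF graph] by (intro in_ring_mon_poly) auto
  ultimately have generator_multiple:
    "mon_poly (single {} (card T)) * (var T * var {i} - var ?S * var {} :: 'k pol) \<in> L_G d E"
    by (simp add: L_G_eq ideal_in.mult)
  have "{i} \<in> stable_sets d E" using S stable_sets_subset_closed by blast
  then have IH_multiple: "(mon_poly (single {} (card T) + single T 1)
      - mon_poly (single {} 1 + spread_mon (single T 1)) :: 'k pol) * var {i} \<in> L_G d E"
    using ideal_in_mult_right[OF IH[unfolded L_G_eq] in_ring_var] by (simp add: L_G_eq)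
  have spread_S: "spread_mon (single ?S 1) = single {i} 1 + spread_mon (single T 1)"
    using \<open>finite ?S\<close> \<open>i \<notin> T\<close> by (simp add: spread_mon_single)
  have Suc_card: "single {} (Suc (card T)) = single {} (card T) + single {} (1 :: nat)"
    by (simp add: single_add[symmetric])
  have "mon_poly (single {} (card ?S) + single ?S 1) - mon_poly (single {} 1 + spread_mon (single ?S 1))
      = (mon_poly (single {} (card T) + single T 1) - mon_poly (single {} 1 + spread_mon (single T 1))) * var {i}
        - mon_poly (single {} (card T)) * (var T * var {i} - var ?S * var {} :: 'k pol)"
    unfolding spread_S card_S(1) Suc_card by (simp add: var_def mon_poly_def mult_single algebra_simps)
  with generator_multiple IH_multiple show ?thesis by (simp add: L_G_eq ideal_in_diff)
qed

lemma L_G_var_congruence: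
  assumes graph: "simple_graph d E" and S: "S \<in> stable_sets d E"
  shows "(mon_poly (single {} (card S) + single S 1)
          - mon_poly (single {} 1 + spread_mon (single S 1)) :: 'k::comm_ring_1 pol) \<in> L_G d E"
  using finite_stable_set[OF S] S
proof (induction S rule: finite_induct)
  case empty
  then show ?case by (simp add: spread_mon_single ideal_in.zero L_G_def)
next
  case (insert i T)
  show ?case
  proof (cases "T = {}")
    case True
    then show ?thesis by (simp add: spread_mon_single ideal_in.zero L_G_def add.commute)
  next
    case False
    have "T \<in> stable_sets d E" using insert.prems stable_sets_subset_closed by blast
    then show ?thesis
      using L_G_var_congruence_insert[OF graph insert.prems insert.hyps(2) False] insert.IH by blast
  qed
qed

lemma L_G_mon_congruence_add:
  assumes graph: "simple_graph d E" and a: "keys a \<subseteq> stable_sets d E" and b: "keys b \<subseteq> stable_sets d E"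
    and "(mon_poly (single {} (mon_weight a) + a)
          - mon_poly (single {} (mdeg a) + spread_mon a) :: 'k::comm_ring_1 pol) \<in> L_G d E"
    and "(mon_poly (single {} (mon_weight b) + b)
          - mon_poly (single {} (mdeg b) + spread_mon b) :: 'k pol) \<in> L_G d E"
  shows "(mon_poly (single {} (mon_weight (a + b)) + (a + b))
          - mon_poly (single {} (mdeg (a + b)) + spread_mon (a + b)) :: 'k pol) \<in> L_G d E"
proof -
  have "(mon_poly (single {} (mon_weight a) + a) * mon_poly (single {} (mon_weight b) + b)
      - mon_poly (single {} (mdeg a) + spread_mon a) * mon_poly (single {} (mdeg b) + spread_mon b)
      :: 'k pol) \<in> L_G d E"
    using assms(4,5) unfolding L_G_eq
    by (rule ideal_in_mult_diff)
      (intro in_ring_mon_poly keys_single_empty_add[OF graph] keys_spread_mon[OF graph] a b)+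
  moreover have "single {} (mon_weight a) + a + (single {} (mon_weight b) + b)
      = single {} (mon_weight (a + b)) + (a + b)"
    by (simp add: mon_weight_add single_add add_ac)
  moreover have "single {} (mdeg a) + spread_mon a + (single {} (mdeg b) + spread_mon b)
      = single {} (mdeg (a + b)) + spread_mon (a + b)"
    by (simp add: mdeg_add spread_mon_add single_add add_ac)
  ultimately show ?thesis by (simp add: mon_poly_mult)
qed

lemma L_G_mon_congruence:
  assumes graph: "simple_graph d E" and m: "keys m \<subseteq> stable_sets d E"
  shows "(mon_poly (single {} (mon_weight m) + m)
          - mon_poly (single {} (mdeg m) + spread_mon m) :: 'k::comm_ring_1 pol) \<in> L_G d E"
  using m
proof (induction "mdeg m" arbitrary: m rule: less_induct)
  case less
  show ?case
  proof (cases "m = 0")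
    case True
    then show ?thesis by (simp add: mon_weight_def spread_mon_def L_G_eq ideal_in.zero)
  next
    case False
    then obtain S where S: "S \<in> keys m" by (metis keys_eq_empty ex_in_conv)
    define m' where "m' = m - single S 1"
    have m_eq: "m = single S 1 + m'"
      by (rule poly_mapping_eqI)
        (use S in \<open>auto simp: m'_def lookup_add lookup_minus lookup_single when_def in_keys_iff\<close>)
    have S_stable: "S \<in> stable_sets d E" using S less.prems by auto
    have m'_stable: "keys m' \<subseteq> stable_sets d E"
      using less.prems by (auto simp: m'_def in_keys_iff lookup_minus)
    have "mdeg m' < mdeg m" using m_eq by (simp add: mdeg_add)
    then have m'_cong: "(mon_poly (single {} (mon_weight m') + m')
        - mon_poly (single {} (mdeg m') + spread_mon m') :: 'k pol) \<in> L_G d E"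
      using less.hyps m'_stable by blast
    have S_cong: "(mon_poly (single {} (mon_weight (single S 1)) + single S 1)
        - mon_poly (single {} (mdeg (single S 1)) + spread_mon (single S 1)) :: 'k pol) \<in> L_G d E"
      using L_G_var_congruence[OF graph S_stable] mon_weight_single finite_stable_set[OF S_stable]
      by simp
    have "keys (single S 1) \<subseteq> stable_sets d E" using S_stable by simp
    then show ?thesis
      unfolding m_eq by (rule L_G_mon_congruence_add[OF graph _ m'_stable S_cong m'_cong])
  qed
qed

lemma L_G_scaled_mon_congruence:
  assumes graph: "simple_graph d E" and m: "keys m \<subseteq> stable_sets d E" and K: "mon_weight m \<le> K"
  shows "(single (single {} K + m) c
          - single (single {} (K - mon_weight m + mdeg m) + spread_mon m) c :: 'k::comm_ring_1 pol) \<in> L_G d E"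
proof -
  have "in_ring (stable_sets d E) (single (single {} (K - mon_weight m)) c :: 'k pol)"
    using empty_in_stable_sets[OF graph] by (intro in_ring_single) simp
  then have "single (single {} (K - mon_weight m)) c * (mon_poly (single {} (mon_weight m) + m)
      - mon_poly (single {} (mdeg m) + spread_mon m) :: 'k pol) \<in> L_G d E"
    unfolding L_G_eq by (rule ideal_in.mult) (use L_G_mon_congruence[OF graph m] in \<open>simp add: L_G_eq\<close>)
  moreover have "single {} (K - mon_weight m) + (single {} (mon_weight m) + m) = single {} K + m"
    using K by (simp add: add.assoc[symmetric] single_add[symmetric])
  moreover have "single {} (K - mon_weight m) + (single {} (mdeg m) + spread_mon m)
      = single {} (K - mon_weight m + mdeg m) + spread_mon m"
    by (simp add: add.assoc[symmetric] single_add[symmetric])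
  ultimately show ?thesis by (simp add: mon_poly_def right_diff_distrib mult_single)
qed

lemma spread_mon_eq_if_pi_mon_eq: "pi_mon m1 = pi_mon m2 \<Longrightarrow> spread_mon m1 = spread_mon m2"
proof (rule poly_mapping_eqI)
  fix T assume pi: "pi_mon m1 = pi_mon m2"
  have "lookup (spread_mon m) {i} = lookup (pi_mon m) (Some i)" for m i
    by (simp add: pi_mon_def spread_mon_def lookup_sum lookup_add lookup_single when_def)
  moreover have "lookup (spread_mon m) T = 0" if "\<nexists>i. T = {i}" for m
    using that by (auto simp: spread_mon_def lookup_sum lookup_single when_def intro!: sum.neutral)
  ultimately show "lookup (spread_mon m1) T = lookup (spread_mon m2) T"
    using pi by (cases "\<exists>i. T = {i}") auto
qed

lemma mdeg_eq_if_pi_mon_eq: "pi_mon m1 = pi_mon m2 \<Longrightarrow> mdeg m1 = mdeg m2"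
proof -
  have "lookup (pi_mon m) None = mdeg m" for m
    by (simp add: pi_mon_def mdeg_def lookup_sum lookup_add lookup_single when_def)
  then show "pi_mon m1 = pi_mon m2 \<Longrightarrow> mdeg m1 = mdeg m2" by metis
qed

lemma I_G_saturation:
  fixes f :: "'k::comm_ring_1 pol"
  assumes graph: "simple_graph d E" and f: "f \<in> I_G d E"
  obtains K where "var {} ^ K * f \<in> L_G d E"
proof -
  have f_ring: "in_ring (stable_sets d E) f" and pi_f: "pi_map f = 0" using f by (auto simp: I_G_def)
  define K where "K = (\<Sum>m\<in>keys f. mon_weight m)"
  define normal where "normal m = single {} (K - mon_weight m + mdeg m) + spread_mon m" for m
  have weight_le: "mon_weight m \<le> K" if "m \<in> keys f" for m
    unfolding K_def using that by (intro member_le_sum) auto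
  have "(\<Sum>m\<in>keys f. single (single {} K + m) (lookup f m) - single (normal m) (lookup f m)) \<in> L_G d E"
    unfolding L_G_eq
  proof (rule ideal_in_sum)
    fix m assume m: "m \<in> keys f"
    have "keys m \<subseteq> stable_sets d E" using f_ring m by (auto simp: in_ring_def)
    then show "single (single {} K + m) (lookup f m) - single (normal m) (lookup f m)
        \<in> ideal_in (stable_sets d E) (L_G_generators d E)"
      using L_G_scaled_mon_congruence[OF graph _ weight_le[OF m]] by (simp add: normal_def L_G_eq)
  qed
  then have "var {} ^ K * f - poly_pushforward normal f \<in> L_G d E"
    by (simp add: var_power single_mult_eq_sum sum_subtractf poly_pushforward_def)
  moreover have "poly_pushforward normal f = 0"
  proof (rule poly_pushforward_eq_0_if_factors_through)
    show "poly_pushforward pi_mon f = 0" using pi_f by (simp add: pi_map_eq_pushforward)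
    show "normal m1 = normal m2" if "pi_mon m1 = pi_mon m2" for m1 m2
      using that spread_mon_eq_if_pi_mon_eq mdeg_eq_if_pi_mon_eq
      unfolding normal_def mon_weight_def by metis
  qed
  ultimately show ?thesis using that by auto
qed

section \<open>Homogeneous ideals\<close>

definition homogeneous :: "'k::comm_ring_1 pol \<Rightarrow> bool" where
  "homogeneous p \<longleftrightarrow> (\<exists>n. \<forall>m\<in>keys p. mdeg m = n)"

lemma homogeneous_if_I_G_2: "f \<in> I_G_2 d E \<Longrightarrow> homogeneous f"
  by (auto simp: I_G_2_def homogeneous_def)

definition hom_component :: "nat \<Rightarrow> 'k::comm_ring_1 pol \<Rightarrow> 'k pol" where
  "hom_component n p = (\<Sum>m\<in>keys p. single m (if mdeg m = n then lookup p m else 0))"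

lemma lookup_hom_component: "lookup (hom_component n p) m = (if mdeg m = n then lookup p m else 0)"
proof -
  have "lookup (hom_component n p) m = (\<Sum>x\<in>keys p. if x = m then (if mdeg x = n then lookup p x else 0) else 0)"
    by (simp add: hom_component_def lookup_sum lookup_single when_def)
  also have "\<dots> = (if mdeg m = n then lookup p m else 0)"
    by (simp add: in_keys_iff)
  finally show ?thesis .
qed

lemma hom_component_add: "hom_component n (p + q) = hom_component n p + hom_component n q"
  by (rule poly_mapping_eqI) (simp add: lookup_hom_component lookup_add)

lemma hom_component_zero [simp]: "hom_component n 0 = 0"
  by (simp add: hom_component_def)

lemma hom_component_sum: "hom_component n (sum f A) = (\<Sum>a\<in>A. hom_component n (f a))"
  by (induction A rule: infinite_finite_induct) (auto simp: hom_component_add)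

lemma hom_component_single: "hom_component n (single m c) = (if mdeg m = n then single m c else 0)"
  by (rule poly_mapping_eqI) (simp add: lookup_hom_component lookup_single when_def)

lemma hom_component_homogeneous:
  assumes "homogeneous f"
  shows "hom_component n f = f \<or> hom_component n f = 0"
proof -
  obtain k where "\<forall>m\<in>keys f. mdeg m = k" using assms by (auto simp: homogeneous_def)
  then have "hom_component n f = (if n = k then f else 0)"
    by (intro poly_mapping_eqI) (auto simp: lookup_hom_component in_keys_iff)
  then show ?thesis by simp
qed

lemma hom_component_single_mult:
  "hom_component n (single a c * p) = (if mdeg a \<le> n then single a c * hom_component (n - mdeg a) p else 0)"
proof -
  have lhs: "hom_component n (single a c * p)
      = (\<Sum>b\<in>keys p. if mdeg a + mdeg b = n then single (a + b) (c * lookup p b) else 0)"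
    by (simp add: single_mult_eq_sum hom_component_sum hom_component_single mdeg_add)
  show ?thesis
  proof (cases "mdeg a \<le> n")
    case True
    have "single a c * hom_component (n - mdeg a) p
        = (\<Sum>b\<in>keys p. single (a + b) (c * (if mdeg b = n - mdeg a then lookup p b else 0)))"
      by (simp add: hom_component_def sum_distrib_left mult_single)
    also have "\<dots> = (\<Sum>b\<in>keys p. if mdeg a + mdeg b = n then single (a + b) (c * lookup p b) else 0)"
      using True by (intro sum.cong) auto
    finally show ?thesis using True lhs by simp
  next
    case False
    then show ?thesis using lhs by (auto intro: sum.neutral)
  qed
qed

lemma hom_component_mult:
  "hom_component n (q * p)
     = (\<Sum>a\<in>keys q. if mdeg a \<le> n then single a (lookup q a) * hom_component (n - mdeg a) p else 0)"
proof -
  have "q * p = (\<Sum>a\<in>keys q. single a (lookup q a)) * p" by (simp add: sum_single_lookup)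
  then show ?thesis by (simp add: sum_distrib_right hom_component_sum hom_component_single_mult)
qed

lemma ideal_in_hom_component:
  assumes F: "\<forall>f\<in>F. homogeneous f" and p: "p \<in> ideal_in V F"
  shows "hom_component n p \<in> ideal_in V F"
  using p
proof (induction arbitrary: n rule: ideal_in.induct)
  case zero
  then show ?case by (simp add: ideal_in.zero)
next
  case (gen f)
  then show ?case using hom_component_homogeneous[of f n] F by (auto intro: ideal_in.gen ideal_in.zero)
next
  case (add p q)
  then show ?case by (simp add: hom_component_add ideal_in.add)
next
  case (mult q p)
  show ?case unfolding hom_component_mult
  proof (rule ideal_in_sum)
    fix a assume "a \<in> keys q"
    then have "in_ring V (single a (lookup q a))"
      using mult.hyps(1) by (intro in_ring_single) (auto simp: in_ring_def)
    then show "(if mdeg a \<le> n then single a (lookup q a) * hom_component (n - mdeg a) p else 0) \<in> ideal_in V F"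
      using mult.IH by (auto intro: ideal_in.mult ideal_in.zero)
  qed
qed

section \<open>Groebner bases\<close>

lemma lm_ideal_keys_divisible:
  assumes "p \<in> lm_ideal V w H" and "m \<in> keys (p :: 'k::comm_ring_1 pol)"
  obtains g r where "g \<in> H" "g \<noteq> 0" "m = lead_mon w g + r"
proof -
  from assms have "\<exists>g\<in>H. g \<noteq> 0 \<and> (\<exists>r. m = lead_mon w g + r)"
    unfolding lm_ideal_def
  proof (induction arbitrary: m rule: ideal_in.induct)
    case (add p q)
    then show ?case using keys_add[of p q] by blast
  next
    case (mult q p)
    obtain a b where ab: "m = a + b" "a \<in> keys q" "b \<in> keys p"
      using keys_mult[of q p] mult.prems by blast
    then obtain g r where "g \<in> H" "g \<noteq> 0" "b = lead_mon w g + r" using mult.IH by blast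
    then show ?case using ab by (intro bexI[of _ g]) (auto intro: exI[of _ "a + r"] simp: add_ac)
  qed auto
  then show ?thesis using that by blast
qed

lemma mon_poly_in_lm_ideal:
  assumes "g \<in> H" "g \<noteq> 0" "keys r \<subseteq> V"
  shows "(mon_poly (lead_mon w g + r) :: 'k::comm_ring_1 pol) \<in> lm_ideal V w H"
proof -
  have "mon_poly r * mon_poly (lead_mon w g) \<in> lm_ideal V w H"
    unfolding lm_ideal_def using assms by (intro ideal_in.mult in_ring_mon_poly ideal_in.gen) auto
  then show ?thesis by (simp add: mon_poly_mult add.commute)
qed

lemma reduced_groebner_basis_key_in_lm_ideal:
  assumes inj: "inj_on w V" and red: "is_reduced_groebner_basis V w I G"
    and g: "g \<in> G" "in_ring V g" and l: "l \<in> keys g" "mon_poly l \<in> lm_ideal V w G"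
  shows "l = lead_mon w g"
proof -
  obtain g2 r where g2: "g2 \<in> G" "g2 \<noteq> 0" and l_eq: "l = lead_mon w g2 + r"
    using lm_ideal_keys_divisible[OF l(2)] by (metis keys_mon_poly singletonI)
  have "keys r \<subseteq> V"
    using l g(2) l_eq keys_add_nat[of "lead_mon w g2" r] by (auto simp: in_ring_def)
  have "g2 = g"
  proof (rule ccontr)
    assume "g2 \<noteq> g"
    then have "mon_poly l \<in> lm_ideal V w (G - {g})"
      using mon_poly_in_lm_ideal[of g2 "G - {g}" r V w] g2 \<open>keys r \<subseteq> V\<close> l_eq by auto
    then show False using red g(1) l(1) by (simp add: is_reduced_groebner_basis_def)
  qed
  show ?thesis
  proof (rule ccontr)
    assume "l \<noteq> lead_mon w g"
    then have "mdeg l \<le> mdeg (lead_mon w g)"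
      using revlex_less_lead_mon[OF inj g(2) _ l(1)] g2 \<open>g2 = g\<close> by (auto simp: revlex_less_def)
    then have "r = 0" using l_eq \<open>g2 = g\<close> by (simp add: mdeg_add mdeg_eq_0_iff)
    with \<open>l \<noteq> lead_mon w g\<close> l_eq \<open>g2 = g\<close> show False by simp
  qed
qed

lemma reduced_groebner_basis_homogeneous:
  assumes inj: "inj_on w V" and F_hom: "\<forall>f\<in>F. homogeneous f" and F_ring: "\<forall>f\<in>F. in_ring V f"
    and red: "is_reduced_groebner_basis V w (ideal_in V F) G" and g: "g \<in> G"
  shows "homogeneous g"
proof -
  have g_ideal: "g \<in> ideal_in V F"
    using red g by (auto simp: is_reduced_groebner_basis_def is_groebner_basis_def)
  then have g_ring: "in_ring V g" using in_ring_ideal_in[OF F_ring] by blast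
  define n where "n = mdeg (lead_mon w g)"
  have "mdeg m = n" if m: "m \<in> keys g" for m
  proof (rule ccontr)
    assume "mdeg m \<noteq> n"
    \<comment> \<open>the leading monomial of the part of g outside degree n is a term of g lying in the
      initial ideal, so by reducedness it would have to be the leading monomial of g itself\<close>
    define rest where "rest = g - hom_component n g"
    have lookup_rest: "lookup rest x = (if mdeg x = n then 0 else lookup g x)" for x
      by (simp add: rest_def lookup_minus lookup_hom_component)
    have rest_ideal: "rest \<in> ideal_in V F"
      unfolding rest_def using g_ideal ideal_in_hom_component[OF F_hom] by (intro ideal_in_diff)
    have "rest \<noteq> 0" using lookup_rest[of m] \<open>mdeg m \<noteq> n\<close> m by (auto simp: in_keys_iff)
    define l where "l = lead_mon w rest"
    have "l \<in> keys rest"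
      unfolding l_def by (rule lead_mon_in_keys[OF inj in_ring_ideal_in[OF F_ring rest_ideal] \<open>rest \<noteq> 0\<close>])
    then have l_deg: "mdeg l \<noteq> n" and l_g: "l \<in> keys g"
      using lookup_rest[of l] by (auto simp: in_keys_iff split: if_splits)
    have "mon_poly l \<in> init_ideal V w (ideal_in V F)"
      unfolding init_ideal_def l_def using rest_ideal \<open>rest \<noteq> 0\<close> by (intro ideal_in.gen) auto
    then have "mon_poly l \<in> lm_ideal V w G"
      using red by (simp add: is_reduced_groebner_basis_def is_groebner_basis_def)
    then have "l = lead_mon w g"
      using reduced_groebner_basis_key_in_lm_ideal[OF inj red g g_ring l_g] by blast
    with l_deg show False by (simp add: n_def)
  qed
  then show ?thesis by (auto simp: homogeneous_def)
qed

lemma lookup_lead_mon_least_var: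
  assumes inj: "inj_on w V" and h: "in_ring V h" "h \<noteq> 0" "homogeneous h"
    and S0: "S0 \<in> V" "\<forall>S\<in>V. w S0 \<le> w S"
    and m0: "m0 \<in> keys h" "lookup m0 S0 = 0"
  shows "lookup (lead_mon w h) S0 = 0"
proof (rule ccontr)
  assume nonzero: "lookup (lead_mon w h) S0 \<noteq> 0"
  with m0 have "m0 \<noteq> lead_mon w h" by auto
  with m0 have "revlex_less w m0 (lead_mon w h)" by (intro revlex_less_lead_mon[OF inj h(1,2)])
  moreover have "mdeg m0 = mdeg (lead_mon w h)"
    using h(3) m0(1) lead_mon_in_keys[OF inj h(1,2)] by (auto simp: homogeneous_def)
  ultimately obtain S where S: "lookup (lead_mon w h) S < lookup m0 S"
    and least: "\<forall>T. lookup m0 T \<noteq> lookup (lead_mon w h) T \<longrightarrow> w S \<le> w T"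
    by (auto simp: revlex_less_def)
  have "S \<in> keys m0" using S by (auto simp: in_keys_iff)
  then have "S \<in> V" using h(1) m0(1) by (auto simp: in_ring_def)
  moreover have "w S \<le> w S0" using least nonzero m0(2) by auto
  then have "w S = w S0" using S0(2) \<open>S \<in> V\<close> by (simp add: antisym)
  ultimately have "S = S0" using inj S0(1) by (auto dest: inj_onD)
  with S m0(2) show False by simp
qed

lemma lead_mon_max_var_power_factor:
  fixes h :: "'k::comm_ring_1 pol"
  assumes inj: "inj_on w V" and S0: "S0 \<in> V" "\<forall>S\<in>V. w S0 \<le> w S"
    and g: "in_ring V g" "g \<noteq> 0" "homogeneous g"
    and max: "\<not> var S0 ^ (k + 1) dvd g" and g_eq: "g = var S0 ^ k * h"
  shows "lead_mon w g = single S0 k + lead_mon w h" and "lookup (lead_mon w h) S0 = 0"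
proof -
  have g_eq': "g = single (single S0 k) 1 * h" using g_eq by (simp add: var_power)
  have S0_keys: "keys (single S0 k) \<subseteq> V" using S0 by simp
  have h: "in_ring V h" "h \<noteq> 0"
    using g g_eq' in_ring_single_mult_iff[OF S0_keys] by auto
  show "lead_mon w g = single S0 k + lead_mon w h"
    unfolding g_eq' by (rule lead_mon_single_mult[OF inj h S0_keys])
  have keys_g: "keys g = (\<lambda>m. single S0 k + m) ` keys h"
    using g_eq' by (simp add: keys_single_one_mult)
  obtain n where "\<forall>m\<in>keys h. k + mdeg m = n"
    using g(3) by (auto simp: homogeneous_def keys_g mdeg_add)
  then have "homogeneous h" unfolding homogeneous_def by (metis add_diff_cancel_left')
  moreover have "\<not> var S0 dvd h"
  proof
    assume "var S0 dvd h"
    then have "var S0 ^ k * var S0 dvd g" unfolding g_eq by (rule mult_dvd_mono[OF dvd_refl])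
    with max show False by (simp add: mult.commute)
  qed
  then obtain m0 where "m0 \<in> keys h" "\<not> 1 \<le> lookup m0 S0" using var_dvdI by blast
  ultimately show "lookup (lead_mon w h) S0 = 0"
    using lookup_lead_mon_least_var[OF inj h _ S0] by simp
qed

definition divide_out_var :: "nat set \<Rightarrow> 'k::comm_ring_1 pol set \<Rightarrow> 'k pol set" where
  "divide_out_var S G = {h. \<exists>g\<in>G. \<exists>k. var S ^ k dvd g \<and> \<not> var S ^ (k + 1) dvd g \<and> g = var S ^ k * h}"

lemma max_var_power_factor_unique:
  fixes h1 h2 :: "'k::comm_ring_1 pol"
  assumes "\<not> var S ^ (k1 + 1) dvd g" "g = var S ^ k1 * h1"
    and "\<not> var S ^ (k2 + 1) dvd g" "g = var S ^ k2 * h2"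
  shows "h1 = h2"
proof -
  have "k1 = k2"
  proof (rule ccontr)
    assume "k1 \<noteq> k2"
    then consider "k1 + 1 \<le> k2" | "k2 + 1 \<le> k1" by linarith
    then show False
    proof cases
      case 1
      then have "var S ^ (k1 + 1) dvd (var S ^ k2 :: 'k pol)" by (rule le_imp_power_dvd)
      then have "var S ^ (k1 + 1) dvd g" unfolding assms(4) by (rule dvd_mult2)
      with assms(1) show False ..
    next
      case 2
      then have "var S ^ (k2 + 1) dvd (var S ^ k1 :: 'k pol)" by (rule le_imp_power_dvd)
      then have "var S ^ (k2 + 1) dvd g" unfolding assms(2) by (rule dvd_mult2)
      with assms(3) show False ..
    qed
  qed
  with assms(2,4) have "single (single S k1) (1 :: 'k) * h1 = single (single S k1) 1 * h2"
    by (simp add: var_power)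
  then show ?thesis by (rule single_one_mult_cancel)
qed

lemma finite_divide_out_var:
  fixes G :: "'k::comm_ring_1 pol set"
  assumes "finite G"
  shows "finite (divide_out_var S G)"
proof -
  define factor :: "'k pol \<Rightarrow> 'k pol" where "factor g = (THE h. \<exists>k. \<not> var S ^ (k + 1) dvd g \<and> g = var S ^ k * h)" for g
  have "divide_out_var S G \<subseteq> factor ` G"
  proof
    fix h assume "h \<in> divide_out_var S G"
    then obtain g k where g: "g \<in> G" and max: "\<not> var S ^ (k + 1) dvd g" "g = var S ^ k * h"
      by (auto simp: divide_out_var_def)
    then have "factor g = h"
      unfolding factor_def using max_var_power_factor_unique by (intro the_equality) blast+
    with g show "h \<in> factor ` G" by blast
  qed
  then show ?thesis using assms finite_surj by blast
qed

context
  fixes d :: nat and E :: "nat set set" and w :: "nat set \<Rightarrow> nat" and F G :: "'k::comm_ring_1 pol set"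
  assumes graph: "simple_graph d E"
    and inj: "inj_on w (stable_sets d E)"
    and empty_least: "\<forall>S\<in>stable_sets d E. w {} \<le> w S"
    and F_hom: "\<forall>f\<in>F. homogeneous f"
    and L_G_subset: "L_G d E \<subseteq> ideal_in (stable_sets d E) F"
    and subset_I_G: "ideal_in (stable_sets d E) F \<subseteq> I_G d E"
    and red: "is_reduced_groebner_basis (stable_sets d E) w (ideal_in (stable_sets d E) F) G"
begin

lemma groebner_basis_element_divide_out_var:
  assumes g: "g \<in> G"
  obtains h k where "h \<in> divide_out_var {} G" "h \<noteq> 0"
    and "lead_mon w g = single {} k + lead_mon w h" "lookup (lead_mon w h) {} = 0"
proof -
  have F_ring: "\<forall>f\<in>F. in_ring (stable_sets d E) f"
    using subset_I_G ideal_in.gen by (fastforce simp: I_G_def)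
  have "g \<noteq> 0" "g \<in> ideal_in (stable_sets d E) F"
    using red g by (auto simp: is_reduced_groebner_basis_def is_groebner_basis_def)
  obtain k where "var {} ^ k dvd g" and max: "\<not> var {} ^ (k + 1) dvd g"
    using exists_max_var_power_dvd[OF \<open>g \<noteq> 0\<close>] .
  then obtain h where g_eq: "g = var {} ^ k * h" by (auto simp: dvd_def)
  have "h \<in> divide_out_var {} G" "h \<noteq> 0"
    unfolding divide_out_var_def using g \<open>g \<noteq> 0\<close> \<open>var {} ^ k dvd g\<close> max g_eq by (blast, auto)
  moreover have "in_ring (stable_sets d E) g"
    using \<open>g \<in> ideal_in (stable_sets d E) F\<close> in_ring_ideal_in[OF F_ring] by blast
  moreover have "homogeneous g"
    using reduced_groebner_basis_homogeneous[OF inj F_hom F_ring red g] .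
  ultimately show ?thesis
    using lead_mon_max_var_power_factor[OF inj empty_in_stable_sets[OF graph] empty_least _ \<open>g \<noteq> 0\<close> _ max g_eq]
      that by blast
qed

lemma lead_mon_I_G_in_lm_ideal:
  fixes f :: "'k pol"
  assumes f: "f \<in> I_G d E" "f \<noteq> 0"
  shows "mon_poly (lead_mon w f) \<in> lm_ideal (stable_sets d E) w (divide_out_var {} G)"
proof -
  let ?V = "stable_sets d E"
  have f_ring: "in_ring ?V f" using f by (simp add: I_G_def)
  have lm_G: "lm_ideal ?V w G = init_ideal ?V w (ideal_in ?V F)"
    using red by (simp add: is_reduced_groebner_basis_def is_groebner_basis_def)
  obtain K where "var {} ^ K * f \<in> L_G d E" using I_G_saturation[OF graph f(1)] .
  then have "var {} ^ K * f \<in> ideal_in ?V F" using L_G_subset by blast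
  moreover have "var {} ^ K * f \<noteq> 0" using f(2) by (simp add: var_power single_one_mult_eq_0_iff)
  ultimately have "mon_poly (lead_mon w (var {} ^ K * f)) \<in> lm_ideal ?V w G"
    unfolding lm_G init_ideal_def by (intro ideal_in.gen) blast
  moreover have "lead_mon w (var {} ^ K * f) = single {} K + lead_mon w f"
    unfolding var_power using lead_mon_single_mult[OF inj f_ring f(2)] empty_in_stable_sets[OF graph]
    by simp
  ultimately have "mon_poly (single {} K + lead_mon w f) \<in> lm_ideal ?V w G" by simp
  then obtain g r where "g \<in> G" and lead_f: "single {} K + lead_mon w f = lead_mon w g + r"
    using lm_ideal_keys_divisible by (metis keys_mon_poly singletonI)
  then obtain h k where h: "h \<in> divide_out_var {} G" "h \<noteq> 0"
    and "lead_mon w g = single {} k + lead_mon w h" "lookup (lead_mon w h) {} = 0"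
    using groebner_basis_element_divide_out_var by metis
  then obtain r' where lead_f_eq: "lead_mon w f = lead_mon w h + r'"
    using lead_f mon_dvd_cancel_single by metis
  have "keys (lead_mon w f) \<subseteq> ?V"
    using lead_mon_in_keys[OF inj f_ring f(2)] f_ring by (auto simp: in_ring_def)
  then have "keys r' \<subseteq> ?V" using lead_f_eq keys_add_nat[of "lead_mon w h" r'] by auto
  then show ?thesis using mon_poly_in_lm_ideal[OF h] lead_f_eq by simp
qed

lemma groebner_basis_I_G_divide_out_var:
  "is_groebner_basis (stable_sets d E) w (I_G d E) (divide_out_var {} G)"
  unfolding is_groebner_basis_def
proof (intro conjI)
  have G: "finite G" "G \<subseteq> I_G d E"
    using red subset_I_G by (auto simp: is_reduced_groebner_basis_def is_groebner_basis_def)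
  from G(1) show "finite (divide_out_var {} G)" by (rule finite_divide_out_var)
  show sub: "divide_out_var {} G \<subseteq> I_G d E"
    using G(2) I_G_var_power_mult_cancel by (fastforce simp: divide_out_var_def)
  show "lm_ideal (stable_sets d E) w (divide_out_var {} G) = init_ideal (stable_sets d E) w (I_G d E)"
  proof
    show "lm_ideal (stable_sets d E) w (divide_out_var {} G) \<subseteq> init_ideal (stable_sets d E) w (I_G d E)"
      unfolding lm_ideal_def init_ideal_def using sub by (intro ideal_in_mono) (blast intro: ideal_in.gen)
    show "init_ideal (stable_sets d E) w (I_G d E) \<subseteq> lm_ideal (stable_sets d E) w (divide_out_var {} G)"
      using lead_mon_I_G_in_lm_ideal unfolding init_ideal_def lm_ideal_def
      by (intro ideal_in_mono) blast
  qed
qed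

end

theorem proposition4p2:
  fixes d :: nat and E :: "nat set set" and w :: "nat set \<Rightarrow> nat"
    and I \<G> :: "'k::field pol set"
  assumes "simple_graph d E"
    and "I \<in> {ideal_in (stable_sets d E) (I_G_2 d E), J_G d E, L_G d E}"
    and "inj_on w (stable_sets d E)"
    and "\<forall>S\<in>stable_sets d E. w {} \<le> w S"
    and "is_reduced_groebner_basis (stable_sets d E) w I \<G>"
  shows "is_groebner_basis (stable_sets d E) w (I_G d E)
           {h. \<exists>g\<in>\<G>. \<exists>k::nat. var {} ^ k dvd g \<and> \<not> var {} ^ (k + 1) dvd g
                              \<and> g = var {} ^ k * h}"
proof -
  obtain F where I: "I = ideal_in (stable_sets d E) F" and "F \<subseteq> I_G_2 d E"
    and "L_G d E \<subseteq> I" "I \<subseteq> I_G d E"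
    using quadratic_ideal_cases[OF assms(1,2)] .
  moreover from \<open>F \<subseteq> I_G_2 d E\<close> have "\<forall>f\<in>F. homogeneous f"
    using homogeneous_if_I_G_2 by blast
  ultimately have "is_groebner_basis (stable_sets d E) w (I_G d E) (divide_out_var {} \<G>)"
    using groebner_basis_I_G_divide_out_var[OF assms(1,3,4)] assms(5) by blast
  then show ?thesis by (simp add: divide_out_var_def)
qed

end
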